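(* For every contractor network and every node $i\in\mathcal V$, the limit $m_i:=\lim_{t\to\infty}m_i^t$ exists, and the vector $\mathbf m=(m_i)_i$ satisfies the fixed-point equation $$m_i=(1-\alpha_i)r_i+\alpha_i\sum_{j\in\delta_{\mathrm{in}}(i)}w_{ij}m_j\quad(i\in\mathcal V),\qquad\text{i.e. }\ \mathbf m=(\mathbf I-\mathbf A)\mathbf r+\mathbf A\mathbf W\mathbf m.$$ Moreover $\mathbf I-\mathbf A\mathbf W$ is invertible, so $\mathbf m$ is the unique solution of this equation, and $\mathbf m=(\mathbf I-\mathbf A\mathbf W)^{-1}(\mathbf I-\mathbf A)\mathbf r$.
   Context: A contractor network is a finite directed graph $G=(\mathcal V,\mathcal E)$ with $n=|\mathcal V|$ nodes, without multiple edges (self-loops and directed cycles are allowed), in which every node has at least one incident edge. For $i\in\mathcal V$ let $\delta_{\mathrm{in}}(i)=\{j:(j,i)\in\mathcal E\}$ and $\delta_{\mathrm{out}}(i)=\{k:(i,k)\in\mathcal E\}$. A node $i$ is a pure principal if $\delta_{\mathrm{in}}(i)=\emptyset$, a pure obligee if $\delta_{\mathrm{out}}(i)=\emptyset$, and an intermediary otherwise. Each edge $(j,i)\in\mathcal E$ carries a weight $w_{ij}>0$; set $w_{ij}=0$ if $(j,i)\notin\mathcal E$; for every node $i$ with $\delta_{\mathrm{in}}(i)\neq\emptyset$ we have $\sum_{j\in\delta_{\mathrm{in}}(i)}w_{ij}=1$. Let $\mathbf W=(w_{ij})_{i,j\in\mathcal V}$. Each node has a risk score $r_i$, with $r_i\in(0,1)$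 if $i$ is not a pure obligee and $r_i=0$ if $i$ is a pure obligee; $\mathbf r=(r_i)_i$. Each node has a propagation parameter $\alpha_i$, with $\alpha_i=0$ for pure principals, $\alpha_i=1$ for pure obligees, and $\alpha_i\in(0,1)$ for intermediaries; $\mathbf A=\mathrm{diag}(\alpha_i)_{i\in\mathcal V}$. The failure process $(\mathbf X^t)_{t\in\mathbb N}$, $\mathbf X^t\in\{0,1\}^n$, is defined by: the $X_i^0$ are independent with $X_i^0\sim\mathrm{Bernoulli}(r_i)$; for each $t\ge0$, conditionally on $(\mathbf X^0,\dots,\mathbf X^t)$, the $X_i^{t+1}$, $i\in\mathcal V$, are independent with $X_i^{t+1}\sim\mathrm{Bernoulli}\big((1-\alpha_i)r_i+\alpha_i\sum_{j\in\delta_{\mathrm{in}}(i)}w_{ij}X_j^t\big)$. Write $m_i^t=\mathbb E[X_i^t]$. *)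

theory Defs
  imports "HOL-Analysis.Analysis" "HOL-Probability.Product_PMF"
begin

text \<open>Nodes are the elements of a finite type 'v (so V = UNIV). An edge (j,i) in E points from j to i.\<close>

definition delta_in :: "('v \<times> 'v) set \<Rightarrow> 'v \<Rightarrow> 'v set" where
  "delta_in E i = {j. (j, i) \<in> E}"

definition delta_out :: "('v \<times> 'v) set \<Rightarrow> 'v \<Rightarrow> 'v set" where
  "delta_out E i = {k. (i, k) \<in> E}"

definition pure_principal :: "('v \<times> 'v) set \<Rightarrow> 'v \<Rightarrow> bool" where
  "pure_principal E i \<longleftrightarrow> delta_in E i = {}"

definition pure_obligee :: "('v \<times> 'v) set \<Rightarrow> 'v \<Rightarrow> bool" where
  "pure_obligee E i \<longleftrightarrow> delta_out E i = {}"

definition intermediary :: "('v \<times> 'v) set \<Rightarrow> 'v \<Rightarrow> bool" where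
  "intermediary E i \<longleftrightarrow> \<not> pure_principal E i \<and> \<not> pure_obligee E i"

definition contractor_network ::
  "('v::finite \<times> 'v) set \<Rightarrow> ('v \<Rightarrow> 'v \<Rightarrow> real) \<Rightarrow> ('v \<Rightarrow> real) \<Rightarrow> ('v \<Rightarrow> real) \<Rightarrow> bool" where
  "contractor_network E w r alpha \<longleftrightarrow>
     (\<forall>i. \<exists>j. (j, i) \<in> E \<or> (i, j) \<in> E) \<and>
     (\<forall>i j. (j, i) \<in> E \<longrightarrow> w i j > 0) \<and>
     (\<forall>i j. (j, i) \<notin> E \<longrightarrow> w i j = 0) \<and>
     (\<forall>i. delta_in E i \<noteq> {} \<longrightarrow> (\<Sum>j\<in>delta_in E i. w i j) = 1) \<and>
     (\<forall>i. \<not> pure_obligee E i \<longrightarrow> 0 < r i \<and> r i < 1) \<and>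
     (\<forall>i. pure_obligee E i \<longrightarrow> r i = 0) \<and>
     (\<forall>i. pure_principal E i \<longrightarrow> alpha i = 0) \<and>
     (\<forall>i. pure_obligee E i \<longrightarrow> alpha i = 1) \<and>
     (\<forall>i. intermediary E i \<longrightarrow> 0 < alpha i \<and> alpha i < 1)"

definition fail_init :: "('v::finite \<Rightarrow> real) \<Rightarrow> ('v \<Rightarrow> bool) pmf" where
  "fail_init r = Pi_pmf UNIV False (\<lambda>i. bernoulli_pmf (r i))"

definition fail_step ::
  "('v::finite \<times> 'v) set \<Rightarrow> ('v \<Rightarrow> 'v \<Rightarrow> real) \<Rightarrow> ('v \<Rightarrow> real) \<Rightarrow> ('v \<Rightarrow> real)
   \<Rightarrow> ('v \<Rightarrow> bool) \<Rightarrow> ('v \<Rightarrow> bool) pmf" where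
  "fail_step E w r alpha x = Pi_pmf UNIV False
     (\<lambda>i. bernoulli_pmf ((1 - alpha i) * r i + alpha i * (\<Sum>j\<in>delta_in E i. w i j * of_bool (x j))))"

primrec fail_dist ::
  "('v::finite \<times> 'v) set \<Rightarrow> ('v \<Rightarrow> 'v \<Rightarrow> real) \<Rightarrow> ('v \<Rightarrow> real) \<Rightarrow> ('v \<Rightarrow> real)
   \<Rightarrow> nat \<Rightarrow> ('v \<Rightarrow> bool) pmf" where
  "fail_dist E w r alpha 0 = fail_init r"
| "fail_dist E w r alpha (Suc t) = bind_pmf (fail_dist E w r alpha t) (fail_step E w r alpha)"

definition fail_mean ::
  "('v::finite \<times> 'v) set \<Rightarrow> ('v \<Rightarrow> 'v \<Rightarrow> real) \<Rightarrow> ('v \<Rightarrow> real) \<Rightarrow> ('v \<Rightarrow> real)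
   \<Rightarrow> nat \<Rightarrow> 'v \<Rightarrow> real" where
  "fail_mean E w r alpha t i = measure_pmf.expectation (fail_dist E w r alpha t) (\<lambda>x. of_bool (x i))"

definition W_mat :: "('v::finite \<Rightarrow> 'v \<Rightarrow> real) \<Rightarrow> real^'v^'v" where
  "W_mat w = (\<chi> i j. w i j)"

definition A_mat :: "('v::finite \<Rightarrow> real) \<Rightarrow> real^'v^'v" where
  "A_mat alpha = (\<chi> i j. if i = j then alpha i else 0)"

definition r_vec :: "('v::finite \<Rightarrow> real) \<Rightarrow> real^'v" where
  "r_vec r = (\<chi> i. r i)"

end

theory Submission
  imports Defs
begin

text \<open>Taking expectations in the transition law shows that the mean vector follows the affine
  iteration m(t+1) = (I - A) r + A W m(t). The matrix A W is nonnegative with row sums at most 1,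
  and its square has row sums strictly below 1: a node with alpha = 1 is a pure obligee, it has
  an in-neighbour, and each of its in-neighbours has an outgoing edge and therefore alpha < 1.
  So (A W)^2 is a contraction for the maximum norm; this makes I - A W invertible and drives the
  iteration to its unique fixed point.\<close>

lemma tendsto_zero_of_two_step_contraction:
  fixes u :: "nat \<Rightarrow> real"
  assumes nonneg: "\<And>t. 0 \<le> u t" and "0 \<le> c" "c < 1"
    and contr: "\<And>t. u (t + 2) \<le> c * u t"
  shows "u \<longlonglongrightarrow> 0"
proof -
  define K where "K = max (u 0) (u 1)"
  have bound: "u t \<le> c ^ (t div 2) * K" for t
  proof (induction t rule: nat_induct2)
    case (step t)
    have "u (t + 2) \<le> c * u t" by (rule contr)
    also have "\<dots> \<le> c * (c ^ (t div 2) * K)" using step \<open>0 \<le> c\<close> by (rule mult_left_mono)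
    finally show ?case by simp
  qed (simp_all add: K_def)
  have "(\<lambda>t. c ^ t) \<longlonglongrightarrow> 0" using \<open>0 \<le> c\<close> \<open>c < 1\<close> by (intro LIMSEQ_power_zero) simp
  then have "(\<lambda>t. c ^ (t div 2)) \<longlonglongrightarrow> 0"
    using filterlim_compose filterlim_at_top_div_const_nat pos2 by blast
  then have "(\<lambda>t. c ^ (t div 2) * K) \<longlonglongrightarrow> 0" by (rule tendsto_mult_left_zero)
  then show ?thesis
    by (rule Lim_null_comparison[rotated]) (use nonneg bound in auto)
qed

lemma infnorm_le_cart:
  fixes x :: "real^'n"
  assumes "\<And>i. \<bar>x $ i\<bar> \<le> K"
  shows "infnorm x \<le> K"
  unfolding infnorm_cart by (rule cSup_least) (use assms in auto)

lemma affine_fixpoint_iff: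
  fixes M :: "'a::field^'n^'n"
  assumes "invertible (mat 1 - M)"
  shows "x = b + M *v x \<longleftrightarrow> x = matrix_inv (mat 1 - M) *v b"
proof -
  let ?N = "mat 1 - M"
  have inverse: "?N ** matrix_inv ?N = mat 1" "matrix_inv ?N ** ?N = mat 1"
    using someI_ex[OF assms[unfolded invertible_def]] unfolding matrix_inv_def by auto
  have "x = b + M *v x \<longleftrightarrow> ?N *v x = b"
    by (auto simp: matrix_vector_mult_diff_rdistrib algebra_simps)
  also have "\<dots> \<longleftrightarrow> x = matrix_inv ?N *v b"
    by (metis inverse matrix_vector_mul_assoc matrix_vector_mul_lid)
  finally show ?thesis .
qed

lemma invertible_id_minus_if_square_contraction:
  fixes M :: "real^'n^'n"
  assumes contr: "\<And>x. infnorm (M *v (M *v x)) \<le> c * infnorm x" and "c < 1"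
  shows "invertible (mat 1 - M)"
proof -
  have "x = 0" if "(mat 1 - M) *v x = 0" for x
  proof -
    from that have "M *v x = x" by (simp add: matrix_vector_mult_diff_rdistrib)
    then have "infnorm x \<le> c * infnorm x" using contr[of x] by simp
    then have "(1 - c) * infnorm x \<le> 0" by (simp add: algebra_simps)
    then have "infnorm x = 0"
      using \<open>c < 1\<close> infnorm_pos_le[of x] by (simp add: mult_le_0_iff)
    then show ?thesis by (simp add: infnorm_eq_0)
  qed
  then show ?thesis
    using matrix_left_invertible_ker invertible_left_inverse by blast
qed

lemma affine_iteration_tendsto_fixpoint:
  fixes M :: "real^'n^'n"
  assumes contr: "\<And>x. infnorm (M *v (M *v x)) \<le> c * infnorm x" and "0 \<le> c" "c < 1"
    and fixpoint: "m = b + M *v m"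
    and step: "\<And>t. x (Suc t) = b + M *v x t"
  shows "x \<longlonglongrightarrow> m"
proof -
  define e where "e t = x t - m" for t
  have e_step: "e (Suc t) = M *v e t" for t
  proof -
    have "e (Suc t) = (b + M *v x t) - (b + M *v m)"
      unfolding e_def step[of t] using fixpoint by simp
    then show ?thesis by (simp add: e_def matrix_vector_mult_diff_distrib)
  qed
  have "(\<lambda>t. infnorm (e t)) \<longlonglongrightarrow> 0"
    by (rule tendsto_zero_of_two_step_contraction[OF infnorm_pos_le \<open>0 \<le> c\<close> \<open>c < 1\<close>])
      (simp add: e_step contr)
  then have "(\<lambda>t. sqrt DIM(real^'n) * infnorm (e t)) \<longlonglongrightarrow> 0"
    by (rule tendsto_mult_right_zero)
  moreover have "\<forall>t. norm (e t) \<le> sqrt DIM(real^'n) * infnorm (e t)"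
    using norm_le_infnorm by blast
  ultimately have "e \<longlonglongrightarrow> 0"
    by (rule Lim_null_comparison[OF always_eventually, rotated])
  then show ?thesis
    unfolding e_def[abs_def] by (rule LIM_zero_cancel)
qed

lemma A_mat_W_mat_mult_vec_nth:
  "((A_mat alpha ** W_mat w) *v x) $ i = alpha i * (\<Sum>j\<in>UNIV. w i j * x $ j)"
proof -
  have "(if P then a else 0) * b = (if P then a * b else 0)" for P and a b :: real by simp
  then show ?thesis
    by (simp add: matrix_vector_mult_def matrix_matrix_mult_def A_mat_def W_mat_def
        sum_distrib_left mult.assoc)
qed

lemma id_minus_A_mat_r_vec_nth:
  "((mat 1 - A_mat alpha) *v r_vec r) $ i = (1 - alpha i) * r i"
proof -
  have "(if P then a else 0) * b = (if P then a * b else 0)" for P and a b :: real by simp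
  then show ?thesis
    by (simp add: matrix_vector_mult_def A_mat_def r_vec_def mat_def left_diff_distrib
        sum_subtractf)
qed

lemma A_mat_W_mat_mult_vec_nth_abs_le:
  assumes "\<And>j. 0 \<le> w i j" "0 \<le> alpha i"
  shows "\<bar>((A_mat alpha ** W_mat w) *v x) $ i\<bar> \<le> alpha i * (\<Sum>j\<in>UNIV. w i j * \<bar>x $ j\<bar>)"
proof -
  have "\<bar>\<Sum>j\<in>UNIV. w i j * x $ j\<bar> \<le> (\<Sum>j\<in>UNIV. w i j * \<bar>x $ j\<bar>)"
    using sum_abs[of "\<lambda>j. w i j * x $ j" UNIV] assms by (simp add: abs_mult)
  then show ?thesis
    using assms by (simp add: A_mat_W_mat_mult_vec_nth abs_mult mult_left_mono)
qed

lemma contractor_network_alpha_bounds: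
  assumes "contractor_network E w r alpha"
  shows "0 \<le> alpha i" "alpha i \<le> 1"
proof -
  have "pure_principal E i \<or> pure_obligee E i \<or> intermediary E i"
    unfolding intermediary_def by blast
  then show "0 \<le> alpha i" "alpha i \<le> 1"
    using assms unfolding contractor_network_def
    by auto
qed

lemma contractor_network_alpha_lt_1:
  assumes "contractor_network E w r alpha" and "\<not> pure_obligee E i"
  shows "alpha i < 1"
proof -
  have "pure_principal E i \<or> intermediary E i"
    using assms(2) unfolding intermediary_def by blast
  then show ?thesis
    using assms(1) unfolding contractor_network_def by auto
qed

lemma contractor_network_r_bounds:
  assumes "contractor_network E w r alpha"
  shows "0 \<le> r i" "r i \<le> 1"
  using assms unfolding contractor_network_def by (cases "pure_obligee E i"; force)+

lemma contractor_network_weight_nonneg: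
  assumes "contractor_network E w r alpha"
  shows "0 \<le> w i j"
  using assms unfolding contractor_network_def by (cases "(j, i) \<in> E"; force)

lemma contractor_network_sum_delta_in:
  assumes "contractor_network E w r alpha"
  shows "(\<Sum>j\<in>delta_in E i. w i j * f j) = (\<Sum>j\<in>UNIV. w i j * f j)"
  by (rule sum.mono_neutral_left)
    (use assms in \<open>auto simp: contractor_network_def delta_in_def\<close>)

lemma contractor_network_sum_weights_le_1:
  assumes "contractor_network E w r alpha"
  shows "(\<Sum>j\<in>UNIV. w i j) \<le> 1"
  using contractor_network_sum_delta_in[OF assms, of i "\<lambda>_. 1"] assms
  by (cases "delta_in E i = {}") (auto simp: contractor_network_def)

lemma contractor_network_weighted_sum_bounds:
  assumes "contractor_network E w r alpha" and "\<And>j. 0 \<le> f j" "\<And>j. f j \<le> 1"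
  shows "0 \<le> (\<Sum>j\<in>UNIV. w i j * f j)" "(\<Sum>j\<in>UNIV. w i j * f j) \<le> 1"
proof -
  show "0 \<le> (\<Sum>j\<in>UNIV. w i j * f j)"
    using assms contractor_network_weight_nonneg[OF assms(1)] by (simp add: sum_nonneg)
  have "(\<Sum>j\<in>UNIV. w i j * f j) \<le> (\<Sum>j\<in>UNIV. w i j)"
    using assms contractor_network_weight_nonneg[OF assms(1)]
    by (intro sum_mono) (simp add: mult_right_le_one_le)
  also have "\<dots> \<le> 1" by (rule contractor_network_sum_weights_le_1[OF assms(1)])
  finally show "(\<Sum>j\<in>UNIV. w i j * f j) \<le> 1" .
qed

lemma contractor_network_A_W_mult_vec_nth_le_infnorm:
  assumes "contractor_network E w r alpha"
  shows "\<bar>((A_mat alpha ** W_mat w) *v x) $ i\<bar> \<le> alpha i * infnorm x"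
proof -
  note alpha = contractor_network_alpha_bounds[OF assms, of i]
  have "\<bar>((A_mat alpha ** W_mat w) *v x) $ i\<bar> \<le> alpha i * (\<Sum>j\<in>UNIV. w i j * \<bar>x $ j\<bar>)"
    using alpha contractor_network_weight_nonneg[OF assms] by (intro A_mat_W_mat_mult_vec_nth_abs_le)
  also have "\<dots> \<le> alpha i * infnorm x"
  proof (rule mult_left_mono[OF _ alpha(1)])
    have "(\<Sum>j\<in>UNIV. w i j * \<bar>x $ j\<bar>) \<le> (\<Sum>j\<in>UNIV. w i j) * infnorm x"
      unfolding sum_distrib_right using contractor_network_weight_nonneg[OF assms]
      by (intro sum_mono mult_left_mono component_le_infnorm_cart)
    also have "\<dots> \<le> infnorm x"
      using contractor_network_sum_weights_le_1[OF assms] contractor_network_weight_nonneg[OF assms]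
      by (simp add: mult_left_le_one_le infnorm_pos_le sum_nonneg)
    finally show "(\<Sum>j\<in>UNIV. w i j * \<bar>x $ j\<bar>) \<le> infnorm x" .
  qed
  finally show ?thesis .
qed

lemma contractor_network_two_step_weight_lt_1:
  assumes "contractor_network E w r alpha"
  shows "alpha i * (\<Sum>j\<in>UNIV. w i j * alpha j) < 1"
proof (cases "pure_obligee E i")
  case False
  have "(\<Sum>j\<in>UNIV. w i j * alpha j) \<le> 1"
    using contractor_network_alpha_bounds[OF assms]
    by (intro contractor_network_weighted_sum_bounds[OF assms])
  then have "alpha i * (\<Sum>j\<in>UNIV. w i j * alpha j) \<le> alpha i"
    using contractor_network_alpha_bounds[OF assms, of i] by (simp add: mult_left_le)
  then show ?thesis using contractor_network_alpha_lt_1[OF assms False] by simp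
next
  case True
  have "alpha i = 1"
    using assms True unfolding contractor_network_def by blast
  have "\<exists>j. (j, i) \<in> E \<or> (i, j) \<in> E"
    using assms unfolding contractor_network_def by blast
  then have in_nonempty: "delta_in E i \<noteq> {}"
    using True unfolding pure_obligee_def delta_out_def delta_in_def by blast
  have "(\<Sum>j\<in>UNIV. w i j * alpha j) = (\<Sum>j\<in>delta_in E i. w i j * alpha j)"
    by (rule contractor_network_sum_delta_in[OF assms, symmetric])
  also have "\<dots> < (\<Sum>j\<in>delta_in E i. w i j)"
  proof (rule sum_strict_mono[OF _ in_nonempty])
    fix j assume j: "j \<in> delta_in E i"
    then have "\<not> pure_obligee E j"
      unfolding delta_in_def pure_obligee_def delta_out_def by blast
    then have "alpha j < 1" by (rule contractor_network_alpha_lt_1[OF assms])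
    moreover have "0 < w i j"
      using assms j unfolding contractor_network_def delta_in_def by blast
    ultimately show "w i j * alpha j < w i j" by simp
  qed simp
  also have "\<dots> = 1"
    using assms in_nonempty unfolding contractor_network_def by blast
  finally show ?thesis using \<open>alpha i = 1\<close> by simp
qed

lemma contractor_network_A_W_square_contraction:
  assumes "contractor_network E w r alpha"
  obtains c where "0 \<le> c" "c < 1"
    and "\<And>x. infnorm ((A_mat alpha ** W_mat w) *v ((A_mat alpha ** W_mat w) *v x)) \<le> c * infnorm x"
proof
  let ?M = "A_mat alpha ** W_mat w"
  define c where "c = Max (range (\<lambda>i. alpha i * (\<Sum>j\<in>UNIV. w i j * alpha j)))"
  have row_le_c: "alpha i * (\<Sum>j\<in>UNIV. w i j * alpha j) \<le> c" for i
    unfolding c_def by (rule Max_ge) auto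
  show "c < 1"
    unfolding c_def using contractor_network_two_step_weight_lt_1[OF assms] by (subst Max_less_iff) auto
  show "0 \<le> c"
    using row_le_c contractor_network_alpha_bounds[OF assms] contractor_network_weight_nonneg[OF assms]
    by (meson order_trans mult_nonneg_nonneg sum_nonneg)
  fix x
  show "infnorm (?M *v (?M *v x)) \<le> c * infnorm x"
  proof (rule infnorm_le_cart)
    fix i
    have "\<bar>(?M *v (?M *v x)) $ i\<bar> \<le> alpha i * (\<Sum>j\<in>UNIV. w i j * \<bar>(?M *v x) $ j\<bar>)"
      using contractor_network_weight_nonneg[OF assms] contractor_network_alpha_bounds[OF assms]
      by (intro A_mat_W_mat_mult_vec_nth_abs_le)
    also have "\<dots> \<le> alpha i * (\<Sum>j\<in>UNIV. w i j * (alpha j * infnorm x))"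
      using contractor_network_weight_nonneg[OF assms] contractor_network_alpha_bounds[OF assms]
      by (intro mult_left_mono sum_mono contractor_network_A_W_mult_vec_nth_le_infnorm[OF assms]) auto
    also have "\<dots> = alpha i * (\<Sum>j\<in>UNIV. w i j * alpha j) * infnorm x"
      by (simp add: sum_distrib_right mult.assoc)
    also have "\<dots> \<le> c * infnorm x"
      by (intro mult_right_mono row_le_c infnorm_pos_le)
    finally show "\<bar>(?M *v (?M *v x)) $ i\<bar> \<le> c * infnorm x" .
  qed
qed

lemma expectation_Pi_pmf_bernoulli_nth:
  fixes p :: "'v::finite \<Rightarrow> real"
  assumes "0 \<le> p i" "p i \<le> 1"
  shows "measure_pmf.expectation (Pi_pmf UNIV False (\<lambda>i. bernoulli_pmf (p i))) (\<lambda>x. of_bool (x i)) = p i"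
proof -
  have "measure_pmf.expectation (Pi_pmf UNIV False (\<lambda>i. bernoulli_pmf (p i))) (\<lambda>x. of_bool (x i))
      = measure_pmf.expectation (map_pmf (\<lambda>x. x i) (Pi_pmf UNIV False (\<lambda>i. bernoulli_pmf (p i))))
          (of_bool :: bool \<Rightarrow> real)"
    by simp
  also have "\<dots> = p i"
    using assms by (subst Pi_pmf_component) auto
  finally show ?thesis .
qed

lemma expectation_bind_pmf_finite:
  fixes D :: "'a::finite pmf" and K :: "'a \<Rightarrow> 'b::finite pmf" and f :: "'b \<Rightarrow> real"
  shows "measure_pmf.expectation (bind_pmf D K) f
       = measure_pmf.expectation D (\<lambda>a. measure_pmf.expectation (K a) f)"
proof -
  have "measure_pmf.expectation (bind_pmf D K) f
      = (\<Sum>a\<in>UNIV. pmf D a *\<^sub>R measure_pmf.expectation (K a) f)"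
    by (rule pmf_expectation_bind) auto
  also have "\<dots> = measure_pmf.expectation D (\<lambda>a. measure_pmf.expectation (K a) f)"
    by (rule integral_measure_pmf[symmetric]) auto
  finally show ?thesis .
qed

lemma expectation_affine_indicator_sum:
  fixes D :: "('v::finite \<Rightarrow> bool) pmf"
    and a b :: real and c :: "'v \<Rightarrow> real"
  shows "measure_pmf.expectation D (\<lambda>x. a + b * (\<Sum>j\<in>S. c j * of_bool (x j)))
       = a + b * (\<Sum>j\<in>S. c j * measure_pmf.expectation D (\<lambda>x. of_bool (x j)))"
proof -
  have integrable: "integrable D (f :: _ \<Rightarrow> real)" for f
    by (simp add: integrable_measure_pmf_finite)
  have "measure_pmf.expectation D (\<lambda>x. a + b * (\<Sum>j\<in>S. c j * of_bool (x j)))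
      = a + b * measure_pmf.expectation D (\<lambda>x. \<Sum>j\<in>S. c j * of_bool (x j))"
    by (subst Bochner_Integration.integral_add[OF integrable[of "\<lambda>_. a"] integrable]) simp
  also have "measure_pmf.expectation D (\<lambda>x. \<Sum>j\<in>S. c j * of_bool (x j))
      = (\<Sum>j\<in>S. c j * measure_pmf.expectation D (\<lambda>x. of_bool (x j)))"
    by (subst Bochner_Integration.integral_sum[OF integrable]) simp
  finally show ?thesis .
qed

lemma contractor_network_step_prob_bounds:
  assumes "contractor_network E w r alpha" and "\<And>j. 0 \<le> f j" "\<And>j. f j \<le> 1"
  shows "0 \<le> (1 - alpha i) * r i + alpha i * (\<Sum>j\<in>delta_in E i. w i j * f j)" (is "0 \<le> ?p")
    and "(1 - alpha i) * r i + alpha i * (\<Sum>j\<in>delta_in E i. w i j * f j) \<le> 1"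
proof -
  have p: "?p = (1 - alpha i) * r i + alpha i * (\<Sum>j\<in>UNIV. w i j * f j)"
    unfolding contractor_network_sum_delta_in[OF assms(1)] ..
  note bounds = contractor_network_alpha_bounds[OF assms(1), of i]
    contractor_network_r_bounds[OF assms(1), of i]
    contractor_network_weighted_sum_bounds[OF assms, of i]
  show "0 \<le> ?p" unfolding p using bounds by simp
  have "?p \<le> (1 - alpha i) * 1 + alpha i * 1"
    unfolding p using bounds by (intro add_mono mult_left_mono) auto
  then show "?p \<le> 1" by simp
qed

lemma fail_mean_Suc:
  assumes "contractor_network E w r alpha"
  shows "fail_mean E w r alpha (Suc t) i
       = (1 - alpha i) * r i + alpha i * (\<Sum>j\<in>delta_in E i. w i j * fail_mean E w r alpha t j)"
proof -
  have bounds: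
    "0 \<le> (1 - alpha k) * r k + alpha k * (\<Sum>j\<in>delta_in E k. w k j * of_bool (x j))"
    "(1 - alpha k) * r k + alpha k * (\<Sum>j\<in>delta_in E k. w k j * of_bool (x j)) \<le> 1" for k x
    by (rule contractor_network_step_prob_bounds[OF assms]; simp)+
  have "fail_mean E w r alpha (Suc t) i = measure_pmf.expectation (fail_dist E w r alpha t)
      (\<lambda>x. (1 - alpha i) * r i + alpha i * (\<Sum>j\<in>delta_in E i. w i j * of_bool (x j)))"
    unfolding fail_mean_def fail_dist.simps expectation_bind_pmf_finite fail_step_def
    by (intro Bochner_Integration.integral_cong refl expectation_Pi_pmf_bernoulli_nth bounds)
  then show ?thesis
    unfolding expectation_affine_indicator_sum fail_mean_def .
qed

lemma fail_mean_affine_iteration: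
  assumes "contractor_network E w r alpha"
  shows "(\<chi> i. fail_mean E w r alpha (Suc t) i)
       = (mat 1 - A_mat alpha) *v r_vec r + (A_mat alpha ** W_mat w) *v (\<chi> i. fail_mean E w r alpha t i)"
  by (simp add: vec_eq_iff fail_mean_Suc[OF assms] id_minus_A_mat_r_vec_nth A_mat_W_mat_mult_vec_nth
      contractor_network_sum_delta_in[OF assms])

theorem mainTheorem4:
  fixes E :: "('v::finite \<times> 'v) set" and w :: "'v \<Rightarrow> 'v \<Rightarrow> real"
    and r alpha :: "'v \<Rightarrow> real"
  assumes "contractor_network E w r alpha"
  shows "\<exists>m :: real^'v.
     (\<forall>i. (\<lambda>t. fail_mean E w r alpha t i) \<longlonglongrightarrow> m $ i) \<and>
     (\<forall>i. m $ i = (1 - alpha i) * r i + alpha i * (\<Sum>j\<in>delta_in E i. w i j * m $ j)) \<and>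
     m = (mat 1 - A_mat alpha) *v r_vec r + (A_mat alpha ** W_mat w) *v m \<and>
     invertible (mat 1 - A_mat alpha ** W_mat w) \<and>
     (\<forall>x :: real^'v. x = (mat 1 - A_mat alpha) *v r_vec r + (A_mat alpha ** W_mat w) *v x \<longrightarrow> x = m) \<and>
     m = matrix_inv (mat 1 - A_mat alpha ** W_mat w) *v ((mat 1 - A_mat alpha) *v r_vec r)"
proof -
  let ?M = "A_mat alpha ** W_mat w" and ?b = "(mat 1 - A_mat alpha) *v r_vec r"
  obtain c where "0 \<le> c" "c < 1" and contr: "\<And>x. infnorm (?M *v (?M *v x)) \<le> c * infnorm x"
    using contractor_network_A_W_square_contraction[OF assms] by blast
  have invertible: "invertible (mat 1 - ?M)"
    using contr \<open>c < 1\<close> by (rule invertible_id_minus_if_square_contraction)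
  define m where "m = matrix_inv (mat 1 - ?M) *v ?b"
  have fixpoint_iff: "x = ?b + ?M *v x \<longleftrightarrow> x = m" for x
    unfolding m_def using invertible by (rule affine_fixpoint_iff)
  then have fixpoint: "m = ?b + ?M *v m" by blast
  have "(\<lambda>t. \<chi> i. fail_mean E w r alpha t i) \<longlonglongrightarrow> m"
    using contr \<open>0 \<le> c\<close> \<open>c < 1\<close> fixpoint fail_mean_affine_iteration[OF assms]
    by (rule affine_iteration_tendsto_fixpoint)
  then have "(\<lambda>t. fail_mean E w r alpha t i) \<longlonglongrightarrow> m $ i" for i
    by (auto dest: tendsto_vec_nth[where i = i])
  moreover have "m $ i = (1 - alpha i) * r i + alpha i * (\<Sum>j\<in>delta_in E i. w i j * m $ j)" for i
    using arg_cong[OF fixpoint, of "\<lambda>v. v $ i"]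
    by (simp add: id_minus_A_mat_r_vec_nth A_mat_W_mat_mult_vec_nth contractor_network_sum_delta_in[OF assms])
  ultimately show ?thesis
    using fixpoint invertible fixpoint_iff m_def by blast
qed

end
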